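(* Let $(F_n)_{n\ge0}$ be the Fibonacci numbers, $F_0=0$, $F_1=F_2=1$, $F_{n+2}=F_{n+1}+F_n$. Then for every $n\ge1$, $$F_{2n-1}F_{(n+1)^2}=F_{2n}\left(F_{2n+1}+F_{2n-1}\right)F_{n^2}+F_{2n+1}\left(F_{2n-1}F_{2n+1}-F_{2n}^2\right)F_{(n-1)^2}.$$ *)

theory Defs
  imports "HOL-Number_Theory.Fib"
begin

end

theory Submission
  imports Defs
begin

text \<open>
  For fixed \<open>k\<close>, the addition formula \<open>F(a + t + 1) = F(t + 1) F(a + 1) + F(t) F(a)\<close>
  turns both sides into linear combinations of \<open>F(a)\<close> and \<open>F(a + 1)\<close>; after expanding
  \<open>F(2k + 1)\<close> and \<open>F(2k + 2)\<close> the same way, the coefficients agree as polynomials in two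
  consecutive Fibonacci numbers.  The theorem is the instance \<open>k = 2n - 1\<close>, \<open>a = (n - 1)\<^sup>2\<close>,
  where the shifts \<open>a + k\<close> and \<open>a + 2k + 2\<close> become \<open>n\<^sup>2\<close> and \<open>(n + 1)\<^sup>2\<close>.
\<close>

lemma fib_add_Suc: "fib (a + Suc m) = fib (Suc m) * fib (Suc a) + fib m * fib a"
  using fib_add[of a m] by simp

lemma fib_shift_identity:
  fixes a k :: nat
  shows "int (fib k) * int (fib (a + 2*k + 2)) =
     int (fib (k+1)) * (int (fib (k+2)) + int (fib k)) * int (fib (a + k))
     + int (fib (k+2)) * (int (fib k) * int (fib (k+2)) - int (fib (k+1))^2) * int (fib a)"
proof (cases k)
  case 0
  then show ?thesis by simp
next
  case (Suc j)
  have far: "fib (a + 2*k + 2) = fib (2*j+4) * fib (Suc a) + fib (2*j+3) * fib a"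
  proof -
    have "a + 2*k + 2 = a + Suc (2*j+3)" "2*j+4 = Suc (2*j+3)" by (simp_all add: Suc)
    then show ?thesis using fib_add_Suc[of a "2*j+3"] by presburger
  qed
  have near: "fib (a + k) = fib (j+1) * fib (Suc a) + fib j * fib a"
    using fib_add_Suc[of a j] by (simp add: Suc)
  have double_even: "fib (2*j+4) = fib (j+2) * fib (j+3) + fib (j+1) * fib (j+2)"
    using fib_add_Suc[of "j+1" "j+2"] by (simp add: algebra_simps numeral_eq_Suc)
  have double_odd: "fib (2*j+3) = fib (j+2) * fib (j+2) + fib (j+1) * fib (j+1)"
    using fib_add_Suc[of "j+1" "j+1"] by (simp add: algebra_simps numeral_eq_Suc)
  have rec2: "fib (j+2) = fib (j+1) + fib j" and rec3: "fib (j+3) = fib (j+2) + fib (j+1)"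
    by (simp_all add: numeral_eq_Suc)
  have "k + 1 = j + 2" "k + 2 = j + 3" "k = j + 1" by (simp_all add: Suc)
  then show ?thesis
    unfolding far near double_even double_odd rec3 of_nat_add of_nat_mult
    unfolding rec2 of_nat_add
    by (simp add: algebra_simps power2_eq_square)
qed

theorem mainTheorem8:
  fixes n :: nat
  assumes "n \<ge> 1"
  shows "int (fib (2*n - 1)) * int (fib ((n+1)^2)) =
         int (fib (2*n)) * (int (fib (2*n+1)) + int (fib (2*n - 1))) * int (fib (n^2))
         + int (fib (2*n+1)) * (int (fib (2*n - 1)) * int (fib (2*n+1)) - int (fib (2*n))^2)
           * int (fib ((n - 1)^2))"
proof -
  have indices: "2*n - 1 + 1 = 2*n" "2*n - 1 + 2 = 2*n + 1"
    "(n - 1)^2 + (2*n - 1) = n^2" "(n - 1)^2 + 2*(2*n - 1) + 2 = (n + 1)^2"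
    using assms by (cases n; simp add: power2_eq_square algebra_simps)+
  show ?thesis
    using fib_shift_identity[where a = "(n - 1)^2" and k = "2*n - 1"] unfolding indices .
qed

end
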